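(* Let $V_\pm$ be real symmetric $n\times n$ matrices with all eigenvalues nonnegative, and let $\nu_{\min}\ge 0$ be the smallest eigenvalue of $V_+$ and $V_-$. For any $\lambda<\nu_{\min}$, the spectrum of $$\tilde{\mathcal W}^-(\lambda):=-(R^-+iS^-(\lambda))(R^--iS^-(\lambda))^{-1}(R^+-iS^+(\lambda))(R^++iS^+(\lambda))^{-1}$$ does not include $-1$.
   Context: Let $\nu_1^\pm\le\dots\le\nu_n^\pm$ be the eigenvalues of $V_\pm$ with orthonormal eigenvectors $r_j^\pm$. For $\lambda<\nu_{\min}$, $\mu^\pm_j(\lambda)=-\sqrt{\nu^\pm_{n+1-j}-\lambda}$ and $\mu^\pm_{n+j}(\lambda)=\sqrt{\nu_j^\pm-\lambda}$, $j=1,\dots,n$. $R^-=(r^-_1\ r^-_2\ \cdots\ r^-_n)$, $S^-(\lambda)=(\mu^-_{n+1}(\lambda)r^-_1\ \cdots\ \mu^-_{2n}(\lambda)r^-_n)$, $R^+=(r^+_n\ r^+_{n-1}\ \cdots\ r^+_1)$, $S^+(\lambda)=(\mu^+_1(\lambda)r^+_n\ \mu^+_2(\lambda)r^+_{n-1}\ \cdots\ \mu^+_n(\lambda)r^+_1)$ (columns listed). (In this setting the paper works with $V_\pm=\lim_{x\to\pm\infty}V(x)$ for a continuous symmetric potential $V$ satisfying an integrability condition, but the claim involves only $V_\pm$.) *)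

theory Defs
  imports "Jordan_Normal_Form.Gauss_Jordan_Elimination" "Jordan_Normal_Form.Char_Poly"
begin

(* Inverse of a square matrix over a field (the matrices inverted below are invertible). *)
definition minv :: "'a :: field mat \<Rightarrow> 'a mat" where
  "minv A = the (mat_inverse A)"

(* Eigenvalue data is 1-indexed as in the paper: nu j, r j for j = 1..n.
   mu nu n lam j for j = 1..2n:
     mu_j     = - sqrt(nu_{n+1-j} - lam),  j = 1..n
     mu_{n+j} =   sqrt(nu_j - lam),        j = 1..n *)
definition mu :: "(nat \<Rightarrow> real) \<Rightarrow> nat \<Rightarrow> real \<Rightarrow> nat \<Rightarrow> real" where
  "mu nu n lam j = (if j \<le> n then - sqrt (nu (n + 1 - j) - lam) else sqrt (nu (j - n) - lam))"

(* Matrix column index c (0-based) corresponds to paper column c+1. *)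
definition Rminus :: "nat \<Rightarrow> (nat \<Rightarrow> real vec) \<Rightarrow> complex mat" where
  "Rminus n r = mat n n (\<lambda>(i,c). complex_of_real (r (c+1) $ i))"

definition Sminus :: "nat \<Rightarrow> (nat \<Rightarrow> real) \<Rightarrow> (nat \<Rightarrow> real vec) \<Rightarrow> real \<Rightarrow> complex mat" where
  "Sminus n nu r lam = mat n n (\<lambda>(i,c). complex_of_real (mu nu n lam (n + (c+1)) * r (c+1) $ i))"

definition Rplus :: "nat \<Rightarrow> (nat \<Rightarrow> real vec) \<Rightarrow> complex mat" where
  "Rplus n r = mat n n (\<lambda>(i,c). complex_of_real (r (n - c) $ i))"

definition Splus :: "nat \<Rightarrow> (nat \<Rightarrow> real) \<Rightarrow> (nat \<Rightarrow> real vec) \<Rightarrow> real \<Rightarrow> complex mat" where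
  "Splus n nu r lam = mat n n (\<lambda>(i,c). complex_of_real (mu nu n lam (c+1) * r (n - c) $ i))"

definition Wtilde_minus ::
  "nat \<Rightarrow> (nat \<Rightarrow> real) \<Rightarrow> (nat \<Rightarrow> real vec) \<Rightarrow> (nat \<Rightarrow> real) \<Rightarrow> (nat \<Rightarrow> real vec) \<Rightarrow> real \<Rightarrow> complex mat" where
  "Wtilde_minus n num rm nup rp lam =
     - ((Rminus n rm + \<i> \<cdot>\<^sub>m Sminus n num rm lam)
        * minv (Rminus n rm - \<i> \<cdot>\<^sub>m Sminus n num rm lam)
        * (Rplus n rp - \<i> \<cdot>\<^sub>m Splus n nup rp lam)
        * minv (Rplus n rp + \<i> \<cdot>\<^sub>m Splus n nup rp lam))"

definition ordered_eigensystem :: "nat \<Rightarrow> real mat \<Rightarrow> (nat \<Rightarrow> real) \<Rightarrow> (nat \<Rightarrow> real vec) \<Rightarrow> bool" where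
  "ordered_eigensystem n V nu r \<longleftrightarrow>
     (\<forall>j\<in>{1..n}. r j \<in> carrier_vec n \<and> V *\<^sub>v r j = nu j \<cdot>\<^sub>v r j) \<and>
     (\<forall>j\<in>{1..n}. \<forall>k\<in>{1..n}. r j \<bullet> r k = (if j = k then 1 else 0)) \<and>
     (\<forall>j\<in>{1..n}. \<forall>k\<in>{1..n}. j \<le> k \<longrightarrow> nu j \<le> nu k)"

end

theory Submission
  imports Defs
begin

(* Each factor R +/- i S(lambda) has the form Q (1 +/- i D) with Q orthogonal (columns r_j) and
   D = diag sqrt(nu_j - lambda); on the plus side the signs are swapped because mu_j < 0 for j <= n.
   If W x = -x, set y = (Q_+(1 - i D_+))^-1 x and z = (Q_-(1 - i D_-))^-1 Q_+(1 + i D_+) y; then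
   Q_-(1 +/- i D_-) z = Q_+(1 -/+ i D_+) y. Adding and subtracting gives Q_- z = Q_+ y and
   Q_- D_- z = - Q_+ D_+ y, so by orthogonality <z, D_- z> = - <y, D_+ y>. The left side is >= 0,
   the right side is < 0 unless y = 0, and y = 0 forces x = 0. *)

definition orthonormal_frame :: "nat \<Rightarrow> (nat \<Rightarrow> real vec) \<Rightarrow> bool" where
  "orthonormal_frame n q \<longleftrightarrow>
     (\<forall>c<n. q c \<in> carrier_vec n) \<and> (\<forall>c<n. \<forall>c'<n. q c \<bullet> q c' = (if c = c' then 1 else 0))"

definition frame_mat :: "nat \<Rightarrow> (nat \<Rightarrow> real vec) \<Rightarrow> (nat \<Rightarrow> complex) \<Rightarrow> complex mat" where
  "frame_mat n q g = mat n n (\<lambda>(i,c). complex_of_real (q c $ i) * g c)"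

lemma orthonormal_frame_sum:
  assumes "orthonormal_frame n q" "a < n" "b < n"
  shows "(\<Sum>i<n. complex_of_real (q a $ i) * complex_of_real (q b $ i)) = (if a = b then 1 else 0)"
proof -
  have "dim_vec (q b) = n" using assms unfolding orthonormal_frame_def by auto
  then have "(\<Sum>i<n. complex_of_real (q a $ i) * complex_of_real (q b $ i)) = complex_of_real (q a \<bullet> q b)"
    unfolding scalar_prod_def by (simp add: lessThan_atLeast0)
  then show ?thesis using assms unfolding orthonormal_frame_def by auto
qed

lemma frame_mat_carrier [simp]: "frame_mat n q g \<in> carrier_mat n n"
  unfolding frame_mat_def by auto

lemma frame_mat_mult_vec_index:
  assumes "i < n" "z \<in> carrier_vec n"
  shows "(frame_mat n q g *\<^sub>v z) $ i = (\<Sum>c<n. complex_of_real (q c $ i) * g c * z $ c)"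
  using assms unfolding frame_mat_def
  by (auto simp: scalar_prod_def lessThan_atLeast0 intro!: sum.cong)

lemma frame_mat_mult_vec_affine:
  assumes "i < n" "z \<in> carrier_vec n"
  shows "(frame_mat n q (\<lambda>c. 1 + a * h c) *\<^sub>v z) $ i
       = (frame_mat n q (\<lambda>_. 1) *\<^sub>v z) $ i + a * (frame_mat n q h *\<^sub>v z) $ i"
  using assms by (simp add: frame_mat_mult_vec_index sum.distrib sum_distrib_left algebra_simps)

lemma frame_mat_right_inverse:
  assumes q: "orthonormal_frame n q" and g: "\<forall>c<n. g c \<noteq> 0"
  shows "frame_mat n q g * minv (frame_mat n q g) = 1\<^sub>m n"
    and "minv (frame_mat n q g) \<in> carrier_mat n n"
proof -
  let ?M = "frame_mat n q g"
  define L where "L = mat n n (\<lambda>(a,i). complex_of_real (q a $ i) / g a)"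
  have L: "L \<in> carrier_mat n n" unfolding L_def by auto
  have LM: "L * ?M = 1\<^sub>m n"
  proof (rule eq_matI)
    fix a b assume "a < dim_row (1\<^sub>m n :: complex mat)" "b < dim_col (1\<^sub>m n :: complex mat)"
    then have a: "a < n" and b: "b < n" by auto
    have "(L * ?M) $$ (a,b) = (\<Sum>i<n. complex_of_real (q a $ i) / g a * (complex_of_real (q b $ i) * g b))"
      using a b unfolding L_def frame_mat_def by (simp add: scalar_prod_def lessThan_atLeast0)
    also have "\<dots> = g b / g a * (\<Sum>i<n. complex_of_real (q a $ i) * complex_of_real (q b $ i))"
      by (simp add: sum_distrib_left field_simps)
    also have "\<dots> = 1\<^sub>m n $$ (a,b)"
      using orthonormal_frame_sum[OF q a b] a b g by auto
    finally show "(L * ?M) $$ (a,b) = 1\<^sub>m n $$ (a,b)" .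
  qed (auto simp: L_def frame_mat_def)
  have "?M * L = 1\<^sub>m n" by (rule mat_mult_left_right_inverse[OF L frame_mat_carrier LM])
  then have "?M \<in> Units (ring_mat TYPE(complex) n undefined)"
    using L LM unfolding Units_def ring_mat_def by auto
  then obtain B where "mat_inverse ?M = Some B"
    using mat_inverse(1)[OF frame_mat_carrier] by fastforce
  with mat_inverse(2)[OF frame_mat_carrier this]
  show "?M * minv ?M = 1\<^sub>m n" "minv ?M \<in> carrier_mat n n" unfolding minv_def by auto
qed

lemma frame_mat_quadratic_form:
  assumes q: "orthonormal_frame n q" and z: "z \<in> carrier_vec n"
  shows "(\<Sum>i<n. cnj ((frame_mat n q (\<lambda>_. 1) *\<^sub>v z) $ i) * (frame_mat n q (\<lambda>c. complex_of_real (d c)) *\<^sub>v z) $ i)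
       = complex_of_real (\<Sum>c<n. d c * (cmod (z $ c))\<^sup>2)"
proof -
  define f where "f = (\<lambda>i b a. cnj (z $ a) * complex_of_real (d b) * z $ b
                              * (complex_of_real (q a $ i) * complex_of_real (q b $ i)))"
  have "(\<Sum>i<n. cnj ((frame_mat n q (\<lambda>_. 1) *\<^sub>v z) $ i) * (frame_mat n q (\<lambda>c. complex_of_real (d c)) *\<^sub>v z) $ i)
      = (\<Sum>i<n. \<Sum>b<n. \<Sum>a<n. f i b a)"
    unfolding f_def using z
    by (simp add: frame_mat_mult_vec_index sum_distrib_left sum_distrib_right mult_ac)
  also have "\<dots> = (\<Sum>b<n. \<Sum>i<n. \<Sum>a<n. f i b a)" by (rule sum.swap)
  also have "\<dots> = (\<Sum>b<n. \<Sum>a<n. \<Sum>i<n. f i b a)" by (rule sum.cong[OF refl], rule sum.swap)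
  also have "\<dots> = (\<Sum>b<n. \<Sum>a<n. cnj (z $ a) * complex_of_real (d b) * z $ b * (if a = b then 1 else 0))"
    unfolding f_def by (intro sum.cong refl) (simp add: sum_distrib_left[symmetric] orthonormal_frame_sum[OF q])
  also have "\<dots> = (\<Sum>c<n. complex_of_real (d c) * (z $ c * cnj (z $ c)))"
    by (simp add: if_distrib mult_ac cong: if_cong)
  also have "\<dots> = complex_of_real (\<Sum>c<n. d c * (cmod (z $ c))\<^sup>2)"
    unfolding of_real_sum of_real_mult complex_norm_square ..
  finally show ?thesis .
qed

lemma frame_cayley_equations_quadratic_forms:
  assumes qm: "orthonormal_frame n qm" and qp: "orthonormal_frame n qp"
    and y: "y \<in> carrier_vec n" and z: "z \<in> carrier_vec n"
    and eq1: "frame_mat n qm (\<lambda>c. 1 + \<i> * complex_of_real (dm c)) *\<^sub>v z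
            = frame_mat n qp (\<lambda>c. 1 - \<i> * complex_of_real (dp c)) *\<^sub>v y"
    and eq2: "frame_mat n qm (\<lambda>c. 1 - \<i> * complex_of_real (dm c)) *\<^sub>v z
            = frame_mat n qp (\<lambda>c. 1 + \<i> * complex_of_real (dp c)) *\<^sub>v y"
  shows "(\<Sum>c<n. dm c * (cmod (z $ c))\<^sup>2) = - (\<Sum>c<n. dp c * (cmod (y $ c))\<^sup>2)"
proof -
  define a where "a = frame_mat n qm (\<lambda>_. 1) *\<^sub>v z"
  define b where "b = frame_mat n qm (\<lambda>c. complex_of_real (dm c)) *\<^sub>v z"
  define c where "c = frame_mat n qp (\<lambda>_. 1) *\<^sub>v y"
  define e where "e = frame_mat n qp (\<lambda>c. complex_of_real (dp c)) *\<^sub>v y"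
  have ac_be: "a $ i = c $ i \<and> b $ i = - e $ i" if i: "i < n" for i
  proof -
    have eq1_i: "a $ i + \<i> * b $ i = c $ i - \<i> * e $ i"
      using arg_cong[OF eq1, of "\<lambda>v. v $ i"]
        frame_mat_mult_vec_affine[OF i z, where q = qm and a = \<i> and h = "\<lambda>c. complex_of_real (dm c)"]
        frame_mat_mult_vec_affine[OF i y, where q = qp and a = "-\<i>" and h = "\<lambda>c. complex_of_real (dp c)"]
      unfolding a_def b_def c_def e_def by simp
    have eq2_i: "a $ i - \<i> * b $ i = c $ i + \<i> * e $ i"
      using arg_cong[OF eq2, of "\<lambda>v. v $ i"]
        frame_mat_mult_vec_affine[OF i z, where q = qm and a = "-\<i>" and h = "\<lambda>c. complex_of_real (dm c)"]
        frame_mat_mult_vec_affine[OF i y, where q = qp and a = \<i> and h = "\<lambda>c. complex_of_real (dp c)"]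
      unfolding a_def b_def c_def e_def by simp
    have "a $ i = c $ i"
      using arg_cong2[OF eq1_i eq2_i, of "(+)"] by (simp add: algebra_simps)
    moreover have "\<i> * b $ i = \<i> * (- e $ i)"
      using arg_cong2[OF eq1_i eq2_i, of "(-)"] by (simp add: algebra_simps)
    then have "b $ i = - e $ i" by (simp only: mult_cancel_left) simp
    ultimately show ?thesis by simp
  qed
  have "complex_of_real (\<Sum>c<n. dm c * (cmod (z $ c))\<^sup>2) = (\<Sum>i<n. cnj (a $ i) * b $ i)"
    unfolding a_def b_def by (rule frame_mat_quadratic_form[OF qm z, symmetric])
  also have "\<dots> = - (\<Sum>i<n. cnj (c $ i) * e $ i)"
    using ac_be by (simp add: sum_negf[symmetric])
  also have "\<dots> = - complex_of_real (\<Sum>c<n. dp c * (cmod (y $ c))\<^sup>2)"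
    unfolding c_def e_def by (simp add: frame_mat_quadratic_form[OF qp y])
  also have "\<dots> = complex_of_real (- (\<Sum>c<n. dp c * (cmod (y $ c))\<^sup>2))"
    by (simp only: of_real_minus)
  finally show ?thesis by (simp only: of_real_eq_iff)
qed

lemma frame_cayley_equations_imp_zero:
  assumes qm: "orthonormal_frame n qm" and qp: "orthonormal_frame n qp"
    and dm: "\<forall>c<n. 0 \<le> dm c" and dp: "\<forall>c<n. 0 < dp c"
    and y: "y \<in> carrier_vec n" and z: "z \<in> carrier_vec n"
    and eq1: "frame_mat n qm (\<lambda>c. 1 + \<i> * complex_of_real (dm c)) *\<^sub>v z
            = frame_mat n qp (\<lambda>c. 1 - \<i> * complex_of_real (dp c)) *\<^sub>v y"
    and eq2: "frame_mat n qm (\<lambda>c. 1 - \<i> * complex_of_real (dm c)) *\<^sub>v z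
            = frame_mat n qp (\<lambda>c. 1 + \<i> * complex_of_real (dp c)) *\<^sub>v y"
  shows "y = 0\<^sub>v n"
proof -
  have nn_y: "0 \<le> dp c * (cmod (y $ c))\<^sup>2" if "c \<in> {..<n}" for c
    using dp that by (auto intro: less_imp_le)
  have "0 \<le> (\<Sum>c<n. dm c * (cmod (z $ c))\<^sup>2)" using dm by (intro sum_nonneg) auto
  moreover have "0 \<le> (\<Sum>c<n. dp c * (cmod (y $ c))\<^sup>2)" using nn_y by (rule sum_nonneg)
  ultimately have "(\<Sum>c<n. dp c * (cmod (y $ c))\<^sup>2) = 0"
    using frame_cayley_equations_quadratic_forms[OF qm qp y z eq1 eq2] by linarith
  then have "\<forall>c\<in>{..<n}. dp c * (cmod (y $ c))\<^sup>2 = 0"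
    using sum_nonneg_eq_0_iff[of "{..<n}" "\<lambda>c. dp c * (cmod (y $ c))\<^sup>2"] nn_y by auto
  then have "y $ c = 0" if "c < n" for c
    using dp that by (metis lessThan_iff less_irrefl mult_eq_0_iff norm_eq_zero power_eq_0_iff)
  then show ?thesis using y by (intro eq_vecI) auto
qed

lemma eigenvalue_neg_product_neg_one:
  fixes A B C D :: "'a :: field mat"
  assumes carrier: "A \<in> carrier_mat n n" "B \<in> carrier_mat n n" "C \<in> carrier_mat n n" "D \<in> carrier_mat n n"
    and inv: "B * minv B = 1\<^sub>m n" "minv B \<in> carrier_mat n n" "D * minv D = 1\<^sub>m n" "minv D \<in> carrier_mat n n"
    and ev: "eigenvalue (- (A * minv B * C * minv D)) (-1)"
  obtains y z where "y \<in> carrier_vec n" "z \<in> carrier_vec n" "y \<noteq> 0\<^sub>v n"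
    "A *\<^sub>v z = D *\<^sub>v y" "B *\<^sub>v z = C *\<^sub>v y"
proof -
  have "- (A * minv B * C * minv D) \<in> carrier_mat n n" using carrier inv by auto
  then obtain x where x: "x \<in> carrier_vec n" "x \<noteq> 0\<^sub>v n"
    and Wx: "- (A * minv B * C * minv D) *\<^sub>v x = -1 \<cdot>\<^sub>v x"
    using ev unfolding eigenvalue_def eigenvector_def by auto
  define y where "y = minv D *\<^sub>v x"
  define z where "z = minv B *\<^sub>v (C *\<^sub>v y)"
  have y: "y \<in> carrier_vec n" and z: "z \<in> carrier_vec n"
    unfolding y_def z_def using carrier inv x by auto
  have "D *\<^sub>v y = (D * minv D) *\<^sub>v x"
    unfolding y_def using carrier(4) inv(4) x by (simp add: assoc_mult_mat_vec)
  then have Dy: "D *\<^sub>v y = x" using inv(3) x by simp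
  have "B *\<^sub>v z = (B * minv B) *\<^sub>v (C *\<^sub>v y)"
    unfolding z_def using carrier(2,3) inv(2) y by (simp add: assoc_mult_mat_vec)
  then have Bz: "B *\<^sub>v z = C *\<^sub>v y" using inv(1) carrier(3) y by simp
  have "(A * minv B * C * minv D) *\<^sub>v x = (A * minv B * C) *\<^sub>v y"
    unfolding y_def using carrier inv x by (intro assoc_mult_mat_vec) auto
  also have "\<dots> = (A * minv B) *\<^sub>v (C *\<^sub>v y)"
    using carrier inv y by (intro assoc_mult_mat_vec) auto
  also have "\<dots> = A *\<^sub>v z"
    unfolding z_def using carrier inv y by (intro assoc_mult_mat_vec) auto
  finally have "(A * minv B * C * minv D) *\<^sub>v x = A *\<^sub>v z" .
  with Wx have "- (A *\<^sub>v z) = -1 \<cdot>\<^sub>v x"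
    using carrier inv x by (simp add: uminus_mult_mat_vec)
  then have "A *\<^sub>v z = x"
  proof (intro eq_vecI)
    fix i assume "i < dim_vec x"
    then have i: "i < n" using x by simp
    assume "- (A *\<^sub>v z) = -1 \<cdot>\<^sub>v x"
    then have "(- (A *\<^sub>v z)) $ i = (-1 \<cdot>\<^sub>v x) $ i" by simp
    then show "(A *\<^sub>v z) $ i = x $ i" using i carrier x by simp
  qed (use carrier x in simp)
  moreover have "y \<noteq> 0\<^sub>v n"
  proof
    assume "y = 0\<^sub>v n"
    then have "x = D *\<^sub>v 0\<^sub>v n" using Dy by simp
    also have "\<dots> = 0\<^sub>v n" using carrier(4) by (intro eq_vecI) auto
    finally have "x = 0\<^sub>v n" .
    with x show False by simp
  qed
  ultimately show thesis using y z Dy Bz by (intro that) auto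
qed

lemma one_minus_i_real_nonzero: "1 - \<i> * complex_of_real d \<noteq> 0"
proof
  assume "1 - \<i> * complex_of_real d = 0"
  then have "Re (1 - \<i> * complex_of_real d) = 0" by simp
  then show False by simp
qed

lemma frame_cayley_product_not_eigenvalue_neg_one:
  assumes qm: "orthonormal_frame n qm" and qp: "orthonormal_frame n qp"
    and dm: "\<forall>c<n. 0 \<le> dm c" and dp: "\<forall>c<n. 0 < dp c"
  shows "\<not> eigenvalue (- (frame_mat n qm (\<lambda>c. 1 + \<i> * complex_of_real (dm c))
                         * minv (frame_mat n qm (\<lambda>c. 1 - \<i> * complex_of_real (dm c)))
                         * frame_mat n qp (\<lambda>c. 1 + \<i> * complex_of_real (dp c))
                         * minv (frame_mat n qp (\<lambda>c. 1 - \<i> * complex_of_real (dp c))))) (-1)"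
    (is "\<not> eigenvalue (- (?P * minv ?Q * ?P' * minv ?Q')) (-1)")
proof
  assume ev: "eigenvalue (- (?P * minv ?Q * ?P' * minv ?Q')) (-1)"
  have inverse: "?Q * minv ?Q = 1\<^sub>m n" "minv ?Q \<in> carrier_mat n n"
    "?Q' * minv ?Q' = 1\<^sub>m n" "minv ?Q' \<in> carrier_mat n n"
    using frame_mat_right_inverse[OF qm] frame_mat_right_inverse[OF qp] one_minus_i_real_nonzero by auto
  obtain y z where "y \<in> carrier_vec n" "z \<in> carrier_vec n" "y \<noteq> 0\<^sub>v n"
    "?P *\<^sub>v z = ?Q' *\<^sub>v y" "?Q *\<^sub>v z = ?P' *\<^sub>v y"
    by (rule eigenvalue_neg_product_neg_one[OF frame_mat_carrier frame_mat_carrier frame_mat_carrier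
          frame_mat_carrier inverse ev])
  with frame_cayley_equations_imp_zero[OF qm qp dm dp] show False by blast
qed

lemma ordered_eigensystem_eigenvalue_gt:
  assumes "ordered_eigensystem n V nu r" "V \<in> carrier_mat n n" "j \<in> {1..n}"
    and "\<forall>k. eigenvalue V k \<longrightarrow> lam < k"
  shows "lam < nu j"
proof -
  have r: "r j \<in> carrier_vec n" "V *\<^sub>v r j = nu j \<cdot>\<^sub>v r j" "r j \<bullet> r j = 1"
    using assms(1,3) unfolding ordered_eigensystem_def by auto
  then have "r j \<noteq> 0\<^sub>v n" by auto
  with r assms(2) have "eigenvalue V (nu j)" unfolding eigenvalue_def eigenvector_def by auto
  with assms(4) show ?thesis by blast
qed

lemma ordered_eigensystem_frame_ascending:
  "ordered_eigensystem n V nu r \<Longrightarrow> orthonormal_frame n (\<lambda>c. r (c + 1))"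
  unfolding ordered_eigensystem_def orthonormal_frame_def by auto

lemma ordered_eigensystem_frame_descending:
  assumes "ordered_eigensystem n V nu r"
  shows "orthonormal_frame n (\<lambda>c. r (n - c))"
proof -
  have "\<And>c c'. c < n \<Longrightarrow> c' < n \<Longrightarrow> n - c = n - c' \<longleftrightarrow> c = c'" by auto
  with assms show ?thesis unfolding ordered_eigensystem_def orthonormal_frame_def by auto
qed

lemma Rminus_Sminus_frame:
  "Rminus n r + \<i> \<cdot>\<^sub>m Sminus n nu r lam
     = frame_mat n (\<lambda>c. r (c + 1)) (\<lambda>c. 1 + \<i> * complex_of_real (sqrt (nu (c + 1) - lam)))"
  "Rminus n r - \<i> \<cdot>\<^sub>m Sminus n nu r lam
     = frame_mat n (\<lambda>c. r (c + 1)) (\<lambda>c. 1 - \<i> * complex_of_real (sqrt (nu (c + 1) - lam)))"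
  unfolding Rminus_def Sminus_def frame_mat_def mu_def by (auto simp: algebra_simps)

lemma Rplus_Splus_frame:
  "Rplus n r - \<i> \<cdot>\<^sub>m Splus n nu r lam
     = frame_mat n (\<lambda>c. r (n - c)) (\<lambda>c. 1 + \<i> * complex_of_real (sqrt (nu (n - c) - lam)))"
  "Rplus n r + \<i> \<cdot>\<^sub>m Splus n nu r lam
     = frame_mat n (\<lambda>c. r (n - c)) (\<lambda>c. 1 - \<i> * complex_of_real (sqrt (nu (n - c) - lam)))"
  unfolding Rplus_def Splus_def frame_mat_def mu_def by (auto simp: algebra_simps)

theorem lemma4p5:
  fixes n :: nat and Vp Vm :: "real mat"
    and nup num :: "nat \<Rightarrow> real" and rp rm :: "nat \<Rightarrow> real vec" and lam :: real
  assumes "Vp \<in> carrier_mat n n" and "transpose_mat Vp = Vp"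
    and "Vm \<in> carrier_mat n n" and "transpose_mat Vm = Vm"
    and "\<forall>k. eigenvalue Vp k \<longrightarrow> 0 \<le> k"
    and "\<forall>k. eigenvalue Vm k \<longrightarrow> 0 \<le> k"
    and "ordered_eigensystem n Vp nup rp"
    and "ordered_eigensystem n Vm num rm"
    and "\<forall>k. eigenvalue Vp k \<or> eigenvalue Vm k \<longrightarrow> lam < k"
  shows "\<not> eigenvalue (Wtilde_minus n num rm nup rp lam) (-1)"
proof -
  have "lam < num (c + 1)" "lam < nup (n - c)" if "c < n" for c
    using ordered_eigensystem_eigenvalue_gt[OF assms(8,3), of "c + 1"]
      ordered_eigensystem_eigenvalue_gt[OF assms(7,1), of "n - c"] assms(9) that by auto
  then have "\<forall>c<n. 0 \<le> sqrt (num (c + 1) - lam)" "\<forall>c<n. 0 < sqrt (nup (n - c) - lam)"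
    by (auto simp: less_imp_le)
  with ordered_eigensystem_frame_ascending[OF assms(8)] ordered_eigensystem_frame_descending[OF assms(7)]
  show ?thesis
    unfolding Wtilde_minus_def Rminus_Sminus_frame Rplus_Splus_frame
    by (rule frame_cayley_product_not_eigenvalue_neg_one)
qed

end
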